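(* There is an absolute constant $C>0$ such that for every sufficiently large prime $p$ and every $f:\mathbb{F}_p\to\mathbb{C}$, $$\Big|\sum_{\substack{x_1,x_2,x_3\in\mathbb{F}_p\\ x_1\neq x_3}} f(x_1)\,\overline{f(x_3)}\,\overline{f(x_2)}\,f(x_2+x_3-x_1)\,K_1(x_1,x_2,x_3)\Big|\le C\,p^{-3/4}\,\|f\|_2^4 .$$
   Context: Let $p$ be an odd prime, $e_p(x)=e^{-2\pi i x/p}$ for $x\in\mathbb{F}_p$, $\|f\|_2=\big(\sum_{x\in\mathbb{F}_p}|f(x)|^2\big)^{1/2}$. For $x_1,x_2,x_3\in\mathbb{F}_p$ and $y_1,y_2,y_3\in\mathbb{F}_p$ set $$R_1=x_1y_1^2-x_2y_2^2-x_3y_3^2+(x_3+x_2-x_1)(y_2+y_3-y_1)^2+(x_2-x_1)(y_1-y_3),$$ and define $K_1(x_1,x_2,x_3)=p^{-3}\sum_{y_1,y_2,y_3\in\mathbb{F}_p}e_p(R_1)$. *)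

theory Defs
  imports "HOL-Analysis.Analysis" "HOL-Computational_Algebra.Primes"
begin

text \<open>F_p is represented by the residues {0..<p} of int; functions on F_p are
  functions int => complex, of which only the values on {0..<p} matter.
  e_p(x) = exp(-2 pi i x / p), which depends only on x mod p.\<close>

definition ep :: "int \<Rightarrow> int \<Rightarrow> complex" where
  "ep p x = exp (- 2 * pi * \<i> * of_int x / of_int p)"

definition R1 :: "int \<Rightarrow> int \<Rightarrow> int \<Rightarrow> int \<Rightarrow> int \<Rightarrow> int \<Rightarrow> int" where
  "R1 x1 x2 x3 y1 y2 y3 =
     x1 * y1^2 - x2 * y2^2 - x3 * y3^2 + (x3 + x2 - x1) * (y2 + y3 - y1)^2
     + (x2 - x1) * (y1 - y3)"

definition K1 :: "int \<Rightarrow> int \<Rightarrow> int \<Rightarrow> int \<Rightarrow> complex" where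
  "K1 p x1 x2 x3 = (1 / of_int p ^ 3) *
     (\<Sum>y1\<in>{0..<p}. \<Sum>y2\<in>{0..<p}. \<Sum>y3\<in>{0..<p}. ep p (R1 x1 x2 x3 y1 y2 y3))"

definition norm2 :: "int \<Rightarrow> (int \<Rightarrow> complex) \<Rightarrow> real" where
  "norm2 p f = sqrt (\<Sum>x\<in>{0..<p}. (cmod (f x))^2)"

end

theory Submission
  imports Defs "HOL-Number_Theory.Number_Theory"
begin

text \<open>Shifting \<open>y1, y2\<close> by \<open>y3\<close> makes the phase \<open>R1\<close> linear in \<open>y3\<close>; summing over \<open>y3\<close> and then
  over the resulting line gives, for \<open>x1 \<noteq> x3\<close>,
  \<open>K1 = p\<^sup>-\<^sup>2 \<Sum>\<^sub>w e\<^sub>p(-(x1 - x2)(x1 - x3) w (1 + (x2 + x3) w))\<close>.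
  Extend this expression to the diagonal and put \<open>s = x2 + x3\<close>: the full sum becomes
  \<open>p\<^sup>-\<^sup>2 \<Sum>\<^sub>s \<Sum>\<^sub>w |\<Sum>\<^sub>a f(a) f(s - a) e\<^sub>p(w (1 + s w) a (s - a))|\<^sup>2\<close>.
  The maps \<open>w \<mapsto> w (1 + s w)\<close> and \<open>a \<mapsto> a (s - a)\<close> are at most 2-to-1 modulo \<open>p\<close>, so by
  orthogonality this is at most \<open>4 \<parallel>f\<parallel>\<^sub>2\<^sup>4 / p\<close>, while the diagonal contributes \<open>\<parallel>f\<parallel>\<^sub>2\<^sup>4 / p\<close>.
  This yields the bound with \<open>5 / p\<close> in place of \<open>C p\<^sup>-\<^sup>3\<^sup>/\<^sup>4\<close>.\<close>

lemma ep_add: "ep p (x + y) = ep p x * ep p y"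
proof -
  have "- 2 * pi * \<i> * of_int (x + y) / of_int p
      = - 2 * pi * \<i> * of_int x / of_int p + - 2 * pi * \<i> * of_int y / of_int p"
    by (simp add: field_simps diff_divide_distrib add_divide_distrib)
  then show ?thesis unfolding ep_def by (simp only: exp_add)
qed

lemma ep_0 [simp]: "ep p 0 = 1"
  unfolding ep_def by simp

lemma cnj_ep: "cnj (ep p x) = ep p (- x)"
  unfolding ep_def by (simp add: exp_cnj)

lemma ep_multiple:
  assumes "p > 0" shows "ep p (p * k) = 1"
proof -
  have "ep p (p * k) = inverse (exp (2 * of_int k * pi * \<i>))"
    unfolding ep_def using assms by (simp add: field_simps exp_minus)
  also have "exp (2 * of_int k * pi * \<i>) = 1"
    by (rule exp_integer_2pi) simp
  finally show ?thesis by simp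
qed

lemma ep_mod: "p > 0 \<Longrightarrow> ep p (x mod p) = ep p x"
  using ep_add[of p "x mod p" "p * (x div p)"] ep_multiple[of p "x div p"] by simp

lemma ep_cong: "p > 0 \<Longrightarrow> [x = y] (mod p) \<Longrightarrow> ep p x = ep p y"
  unfolding cong_def by (metis ep_mod)

lemma ep_eq_1_iff:
  assumes "p > 0" shows "ep p x = 1 \<longleftrightarrow> p dvd x"
proof
  assume "p dvd x"
  then show "ep p x = 1" using ep_multiple[OF assms] by auto
next
  assume "ep p x = 1"
  then obtain n :: int where "- 2 * pi * of_int x / of_int p = of_int (2 * n) * pi"
    unfolding ep_def exp_eq_1 by (auto simp: field_simps)
  then have "- of_int x = of_int p * (of_int n :: real)"
    using assms by (simp add: field_simps)
      (metis mult.commute mult_left_cancel pi_neq_zero minus_mult_right)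
  then have "- x = p * n" by (metis of_int_eq_iff of_int_minus of_int_mult)
  then show "p dvd x" by (metis dvd_minus_iff dvd_triv_left)
qed

lemma sum_reindex_inj_endo:
  assumes "finite A" "f ` A \<subseteq> A" "inj_on f A"
  shows "(\<Sum>x\<in>A. g (f x)) = (\<Sum>x\<in>A. g x)"
  using sum.reindex[OF assms(3), of g] endo_inj_surj[OF assms] by simp

lemma sum_mod_shift:
  fixes p c :: int
  assumes "p > 0"
  shows "(\<Sum>y\<in>{0..<p}. g ((y + c) mod p)) = (\<Sum>y\<in>{0..<p}. g y)"
proof (rule sum_reindex_inj_endo)
  show "inj_on (\<lambda>y. (y + c) mod p) {0..<p}"
    by (rule inj_onI) (metis atLeastLessThan_iff cong_add_rcancel cong_def cong_less_imp_eq_int)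
qed (use assms in auto)

lemma sum_mod_mult:
  fixes p h :: int
  assumes "p > 0" "coprime h p"
  shows "(\<Sum>y\<in>{0..<p}. g ((h * y) mod p)) = (\<Sum>y\<in>{0..<p}. g y)"
proof (rule sum_reindex_inj_endo)
  show "inj_on (\<lambda>y. (h * y) mod p) {0..<p}"
    by (rule inj_onI)
      (metis assms(2) atLeastLessThan_iff cong_def cong_less_imp_eq_int cong_mult_lcancel)
qed (use assms in auto)

lemma sum_ep_linear:
  fixes p L :: int
  assumes "p > 0"
  shows "(\<Sum>y\<in>{0..<p}. ep p (y * L)) = (if p dvd L then of_int p else 0)"
proof (cases "p dvd L")
  case True
  then have "ep p (y * L) = 1" for y
    using ep_eq_1_iff[OF assms] by simp
  then show ?thesis using True assms by simp
next
  case False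
  let ?S = "\<Sum>y\<in>{0..<p}. ep p (y * L)"
  have "?S = (\<Sum>y\<in>{0..<p}. ep p (((y + 1) mod p) * L))"
    using sum_mod_shift[OF assms, of "\<lambda>y. ep p (y * L)" 1] by simp
  also have "\<dots> = (\<Sum>y\<in>{0..<p}. ep p (y * L) * ep p L)"
  proof (rule sum.cong)
    fix y
    have "[((y + 1) mod p) * L = y * L + L] (mod p)"
      by (simp add: cong_def mod_simps algebra_simps)
    then show "ep p (((y + 1) mod p) * L) = ep p (y * L) * ep p L"
      using ep_cong[OF assms] ep_add by metis
  qed simp
  also have "\<dots> = ?S * ep p L" by (simp add: sum_distrib_right)
  finally have "?S * (1 - ep p L) = 0" by (simp add: algebra_simps)
  moreover have "ep p L \<noteq> 1" using ep_eq_1_iff[OF assms] False by simp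
  ultimately show ?thesis using False by simp
qed

lemma card_quadratic_congruence_solutions_le_2:
  fixes p a b c :: int
  assumes p: "prime p" and nondeg: "\<not> (p dvd a \<and> p dvd b)"
    and Y: "Y \<subseteq> {0..<p}" "\<And>y. y \<in> Y \<Longrightarrow> [a * y^2 + b * y = c] (mod p)"
  shows "card Y \<le> 2"
proof (cases "Y = {}")
  case False
  then obtain x where x: "x \<in> Y" by auto
  define B where "B = {y\<in>{0..<p}. p dvd a * (x + y) + b}"
  \<comment> \<open>the difference of two values of the quadratic factors as \<open>(y - x) (a (x + y) + b)\<close>\<close>
  have sub: "Y \<subseteq> insert x B"
  proof
    fix y assume "y \<in> Y"
    then have y: "y \<in> {0..<p}" and "[a * y^2 + b * y = a * x^2 + b * x] (mod p)"
      using Y x cong_sym cong_trans by blast+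
    then have "p dvd (y - x) * (a * (x + y) + b)"
      by (simp add: cong_iff_dvd_diff algebra_simps power2_eq_square)
    then have "p dvd (y - x) \<or> p dvd (a * (x + y) + b)"
      using p by (simp add: prime_dvd_mult_iff)
    then show "y \<in> insert x B"
      using Y(1) x y unfolding B_def
      by (auto simp: cong_iff_dvd_diff[symmetric] cong_less_imp_eq_int)
  qed
  have "u = v" if "u \<in> B" "v \<in> B" for u v
  proof -
    have "p dvd (a * (x + u) + b) - (a * (x + v) + b)"
      using that unfolding B_def by (intro dvd_diff) auto
    then have "p dvd a * (u - v)" by (simp add: algebra_simps)
    moreover have "\<not> p dvd a"
      using that(1) nondeg unfolding B_def by (auto simp: dvd_add_right_iff)
    ultimately have "[u = v] (mod p)"
      using p by (simp add: prime_dvd_mult_iff cong_iff_dvd_diff)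
    then show "u = v" using that cong_less_imp_eq_int unfolding B_def by auto
  qed
  moreover have fin: "finite B" unfolding B_def by (rule finite_subset[of _ "{0..<p}"]) auto
  ultimately have "card B \<le> 1" by (simp add: card_le_Suc0_iff_eq)
  then have "card (insert x B) \<le> 2" using fin by (simp add: card_insert_if)
  with card_mono[OF _ sub] fin show ?thesis by simp
qed simp

lemma sum_comp_le_card_fibre:
  fixes g :: "'a \<Rightarrow> 'b" and F :: "'b \<Rightarrow> real"
  assumes "finite W" "finite L" "g ` W \<subseteq> L"
    and fibre: "\<And>l. card {w\<in>W. g w = l} \<le> k" and nonneg: "\<And>l. l \<in> L \<Longrightarrow> F l \<ge> 0"
  shows "(\<Sum>w\<in>W. F (g w)) \<le> k * (\<Sum>l\<in>L. F l)"
proof -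
  have "(\<Sum>w\<in>W. F (g w)) = (\<Sum>l\<in>g ` W. \<Sum>w\<in>{x\<in>W. g x = l}. F (g w))"
    by (rule sum.image_gen[OF assms(1)])
  also have "\<dots> = (\<Sum>l\<in>g ` W. card {x\<in>W. g x = l} * F l)"
    by (rule sum.cong) auto
  also have "\<dots> \<le> (\<Sum>l\<in>g ` W. k * F l)"
    using fibre nonneg assms(3) by (intro sum_mono mult_right_mono) auto
  also have "\<dots> \<le> (\<Sum>l\<in>L. k * F l)"
    using assms(2,3) nonneg by (intro sum_mono2) auto
  finally show ?thesis by (simp add: sum_distrib_left)
qed

lemma norm_sum_related_pairs_le:
  fixes G :: "'a \<Rightarrow> complex" and rel :: "'a \<Rightarrow> 'a \<Rightarrow> bool"
  assumes "finite A" and sym: "\<And>a b. rel a b \<longleftrightarrow> rel b a"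
    and classes: "\<And>a. a \<in> A \<Longrightarrow> card {b\<in>A. rel a b} \<le> k"
  shows "cmod (\<Sum>a\<in>A. \<Sum>b\<in>A. if rel a b then G a * cnj (G b) else 0)
           \<le> k * (\<Sum>a\<in>A. (cmod (G a))^2)"
proof -
  define X where "X = (\<Sum>a\<in>A. \<Sum>b\<in>A. if rel a b then (cmod (G a))^2 else 0)"
  have X_swap: "(\<Sum>a\<in>A. \<Sum>b\<in>A. if rel a b then (cmod (G b))^2 else 0) = X"
    unfolding X_def by (subst sum.swap) (simp add: sym)
  have "(\<Sum>b\<in>A. if rel a b then (cmod (G a))^2 else 0) \<le> k * (cmod (G a))^2" if "a \<in> A" for a
  proof -
    have "(\<Sum>b\<in>A. if rel a b then (cmod (G a))^2 else 0) = card {b\<in>A. rel a b} * (cmod (G a))^2"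
      by (simp add: sum.If_cases[OF assms(1)] Int_def conj_commute)
    also have "\<dots> \<le> k * (cmod (G a))^2"
      using classes[OF that] by (intro mult_right_mono) auto
    finally show ?thesis .
  qed
  then have X_le: "X \<le> k * (\<Sum>a\<in>A. (cmod (G a))^2)"
    unfolding X_def sum_distrib_left by (rule sum_mono)
  have "cmod (\<Sum>a\<in>A. \<Sum>b\<in>A. if rel a b then G a * cnj (G b) else 0)
      \<le> (\<Sum>a\<in>A. \<Sum>b\<in>A. cmod (if rel a b then G a * cnj (G b) else 0))"
    by (rule order_trans[OF norm_sum sum_mono[OF norm_sum]])
  also have "\<dots> \<le> (\<Sum>a\<in>A. \<Sum>b\<in>A. (if rel a b then (cmod (G a))^2 else 0) / 2
                                   + (if rel a b then (cmod (G b))^2 else 0) / 2)"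
  proof (intro sum_mono)
    fix a b
    have "cmod (G a) * cmod (G b) \<le> ((cmod (G a))^2 + (cmod (G b))^2) / 2"
      using sum_squares_bound[of "cmod (G a)" "cmod (G b)"] by (simp add: power2_eq_square)
    then show "cmod (if rel a b then G a * cnj (G b) else 0)
        \<le> (if rel a b then (cmod (G a))^2 else 0) / 2 + (if rel a b then (cmod (G b))^2 else 0) / 2"
      by (auto simp: norm_mult)
  qed
  also have "\<dots> = X"
    using X_swap unfolding X_def by (simp add: sum.distrib sum_divide_distrib[symmetric])
  finally show ?thesis using X_le by linarith
qed

lemma sum_norm_exp_sum_square:
  fixes p :: int and G :: "int \<Rightarrow> complex" and q :: "int \<Rightarrow> int"
  assumes "p > 0"
  shows "of_real (\<Sum>l\<in>{0..<p}. (cmod (\<Sum>a\<in>{0..<p}. G a * ep p (l * q a)))^2)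
           = of_int p * (\<Sum>a\<in>{0..<p}. \<Sum>b\<in>{0..<p}.
                          if p dvd q a - q b then G a * cnj (G b) else 0)"
proof -
  define A where "A = {0..<p}"
  have "of_real (\<Sum>l\<in>A. (cmod (\<Sum>a\<in>A. G a * ep p (l * q a)))^2)
      = (\<Sum>l\<in>A. (\<Sum>a\<in>A. G a * ep p (l * q a)) * (\<Sum>b\<in>A. cnj (G b) * ep p (- (l * q b))))"
    by (simp only: of_real_sum complex_norm_square) (simp add: cnj_sum cnj_ep)
  also have "\<dots> = (\<Sum>l\<in>A. \<Sum>a\<in>A. \<Sum>b\<in>A. G a * cnj (G b) * ep p (l * (q a - q b)))"
    by (simp add: sum_product ep_add[symmetric] algebra_simps)
  also have "\<dots> = (\<Sum>a\<in>A. \<Sum>l\<in>A. \<Sum>b\<in>A. G a * cnj (G b) * ep p (l * (q a - q b)))"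
    by (rule sum.swap)
  also have "\<dots> = (\<Sum>a\<in>A. \<Sum>b\<in>A. G a * cnj (G b) * (\<Sum>l\<in>A. ep p (l * (q a - q b))))"
    by (rule sum.cong[OF refl], subst sum.swap) (simp add: sum_distrib_left)
  also have "\<dots> = of_int p * (\<Sum>a\<in>A. \<Sum>b\<in>A. if p dvd q a - q b then G a * cnj (G b) else 0)"
    unfolding A_def sum_ep_linear[OF assms] sum_distrib_left by (intro sum.cong refl) simp
  finally show ?thesis unfolding A_def .
qed

lemma sum_norm_exp_sum_square_le:
  fixes p :: int and G :: "int \<Rightarrow> complex" and q :: "int \<Rightarrow> int"
  assumes "p > 0"
    and classes: "\<And>a. a \<in> {0..<p} \<Longrightarrow> card {b\<in>{0..<p}. p dvd q a - q b} \<le> k"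
  shows "(\<Sum>l\<in>{0..<p}. (cmod (\<Sum>a\<in>{0..<p}. G a * ep p (l * q a)))^2)
           \<le> real k * p * (\<Sum>a\<in>{0..<p}. (cmod (G a))^2)"
proof -
  have rel_sym: "p dvd q a - q b \<longleftrightarrow> p dvd q b - q a" for a b
    by (metis dvd_minus_iff minus_diff_eq)
  let ?S = "\<Sum>l\<in>{0..<p}. (cmod (\<Sum>a\<in>{0..<p}. G a * ep p (l * q a)))^2"
  have "?S \<ge> 0" by (simp add: sum_nonneg)
  then have "?S = cmod (of_real ?S)" by (simp only: norm_of_real abs_of_nonneg)
  also have "\<dots> = p * cmod (\<Sum>a\<in>{0..<p}. \<Sum>b\<in>{0..<p}.
                              if p dvd q a - q b then G a * cnj (G b) else 0)"
    unfolding sum_norm_exp_sum_square[OF assms(1)] using assms(1) by (simp add: norm_mult)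
  also have "\<dots> \<le> p * (k * (\<Sum>a\<in>{0..<p}. (cmod (G a))^2))"
    using assms(1) by (intro mult_left_mono norm_sum_related_pairs_le rel_sym classes) auto
  finally show ?thesis by (simp add: algebra_simps)
qed

lemma sum_over_line_mod:
  fixes p h a :: int
  assumes p: "p > 0" and cop: "coprime h p"
  shows "(\<Sum>u\<in>{0..<p}. \<Sum>v\<in>{0..<p}. if p dvd a * u - h * v then g u v else 0)
           = (\<Sum>w\<in>{0..<p}. g ((h * w) mod p) ((a * w) mod p))"
proof -
  have on_line: "p dvd a * ((h * w) mod p) - h * v \<longleftrightarrow> v = (a * w) mod p"
    if v: "v \<in> {0..<p}" for v w
  proof -
    have "[a * ((h * w) mod p) = a * (h * w)] (mod p)"
      by (rule cong_scalar_left) (simp add: cong_def)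
    then have shift: "[a * ((h * w) mod p) = h * (a * w)] (mod p)"
      by (simp add: ac_simps)
    have "p dvd a * ((h * w) mod p) - h * v \<longleftrightarrow> [h * v = a * ((h * w) mod p)] (mod p)"
      unfolding cong_iff_dvd_diff by (rule dvd_diff_commute)
    also have "\<dots> \<longleftrightarrow> [h * v = h * (a * w)] (mod p)"
      using shift cong_trans cong_sym by blast
    also have "\<dots> \<longleftrightarrow> [v = a * w] (mod p)"
      using cop by (rule cong_mult_lcancel)
    also have "\<dots> \<longleftrightarrow> v = (a * w) mod p"
      using v by (simp add: cong_def)
    finally show ?thesis .
  qed
  have "(\<Sum>u\<in>{0..<p}. \<Sum>v\<in>{0..<p}. if p dvd a * u - h * v then g u v else 0)
      = (\<Sum>w\<in>{0..<p}. \<Sum>v\<in>{0..<p}.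
            if p dvd a * ((h * w) mod p) - h * v then g ((h * w) mod p) v else 0)"
    by (rule sum_mod_mult[OF p cop, symmetric])
  also have "\<dots> = (\<Sum>w\<in>{0..<p}. \<Sum>v\<in>{0..<p}.
            if v = (a * w) mod p then g ((h * w) mod p) v else 0)"
    by (intro sum.cong refl) (simp add: on_line)
  also have "\<dots> = (\<Sum>w\<in>{0..<p}. g ((h * w) mod p) ((a * w) mod p))"
    using p by (simp add: sum.delta')
  finally show ?thesis .
qed

lemma R1_cong:
  "[a = a'] (mod p) \<Longrightarrow> [b = b'] (mod p) \<Longrightarrow> [c = c'] (mod p)
     \<Longrightarrow> [R1 x1 x2 x3 a b c = R1 x1 x2 x3 a' b' c'] (mod p)"
  unfolding R1_def by (intro cong_add cong_mult cong_diff cong_pow cong_refl)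

lemma R1_translate:
  "R1 x1 x2 x3 (y + u) (y + v) y
     = y * (2 * ((2 * x1 - x2 - x3) * u - (x1 - x3) * v)) + R1 x1 x2 x3 u v 0"
  unfolding R1_def by (simp add: algebra_simps power2_eq_square)

lemma R1_on_line:
  "R1 x1 x2 x3 ((x1 - x3) * w) ((2 * x1 - x2 - x3) * w) 0
     = - (x1 - x2) * (x1 - x3) * w * (1 + (x2 + x3) * w)"
  unfolding R1_def by (simp add: algebra_simps power2_eq_square)

text \<open>Translating \<open>y1, y2\<close> by \<open>y3\<close> makes \<open>R1\<close> linear in \<open>y3\<close>, so summing over \<open>y3\<close>
  restricts \<open>(u, v)\<close> to a line.\<close>

lemma sum_ep_R1:
  fixes p :: int
  assumes p: "prime p" "p > 2"
  shows "(\<Sum>y1\<in>{0..<p}. \<Sum>y2\<in>{0..<p}. \<Sum>y3\<in>{0..<p}. ep p (R1 x1 x2 x3 y1 y2 y3))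
    = of_int p * (\<Sum>u\<in>{0..<p}. \<Sum>v\<in>{0..<p}.
        if p dvd (2 * x1 - x2 - x3) * u - (x1 - x3) * v then ep p (R1 x1 x2 x3 u v 0) else 0)"
proof -
  define A where "A = {0..<p}"
  define L where "L u v = (2 * x1 - x2 - x3) * u - (x1 - x3) * v" for u v
  have p0: "p > 0" using p by simp
  have "p dvd 2 * l \<longleftrightarrow> p dvd l" for l
    using p zdvd_imp_le[of p 2] by (auto simp: prime_dvd_mult_iff)
  then have sum_y3: "(\<Sum>y3\<in>A. ep p (y3 * (2 * L u v))) = (if p dvd L u v then of_int p else 0)" for u v
    unfolding A_def by (simp add: sum_ep_linear[OF p0])
  have translate: "(\<Sum>y1\<in>A. \<Sum>y2\<in>A. ep p (R1 x1 x2 x3 y1 y2 y3))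
      = (\<Sum>u\<in>A. \<Sum>v\<in>A. ep p (y3 * (2 * L u v)) * ep p (R1 x1 x2 x3 u v 0))" for y3
  proof -
    have "(\<Sum>y1\<in>A. \<Sum>y2\<in>A. ep p (R1 x1 x2 x3 y1 y2 y3))
        = (\<Sum>u\<in>A. \<Sum>v\<in>A. ep p (R1 x1 x2 x3 ((u + y3) mod p) ((v + y3) mod p) y3))"
      unfolding A_def
      by (simp only: sum_mod_shift[OF p0, of "\<lambda>y1. \<Sum>y2\<in>{0..<p}. ep p (R1 x1 x2 x3 y1 y2 y3)"]
          sum_mod_shift[OF p0, of "\<lambda>y2. ep p (R1 x1 x2 x3 _ y2 y3)"])
    also have "\<dots> = (\<Sum>u\<in>A. \<Sum>v\<in>A. ep p (R1 x1 x2 x3 (y3 + u) (y3 + v) y3))"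
      by (intro sum.cong refl ep_cong[OF p0] R1_cong) (simp_all add: cong_def add.commute)
    also have "\<dots> = (\<Sum>u\<in>A. \<Sum>v\<in>A. ep p (y3 * (2 * L u v)) * ep p (R1 x1 x2 x3 u v 0))"
      by (simp add: R1_translate ep_add L_def)
    finally show ?thesis .
  qed
  have "(\<Sum>y1\<in>A. \<Sum>y2\<in>A. \<Sum>y3\<in>A. ep p (R1 x1 x2 x3 y1 y2 y3))
      = (\<Sum>y3\<in>A. \<Sum>y1\<in>A. \<Sum>y2\<in>A. ep p (R1 x1 x2 x3 y1 y2 y3))"
    by (subst sum.swap) (rule sum.cong[OF refl], rule sum.swap)
  also have "\<dots> = (\<Sum>y3\<in>A. \<Sum>u\<in>A. \<Sum>v\<in>A. ep p (y3 * (2 * L u v)) * ep p (R1 x1 x2 x3 u v 0))"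
    by (simp only: translate)
  also have "\<dots> = (\<Sum>u\<in>A. \<Sum>y3\<in>A. \<Sum>v\<in>A. ep p (y3 * (2 * L u v)) * ep p (R1 x1 x2 x3 u v 0))"
    by (rule sum.swap)
  also have "\<dots> = (\<Sum>u\<in>A. \<Sum>v\<in>A. (\<Sum>y3\<in>A. ep p (y3 * (2 * L u v))) * ep p (R1 x1 x2 x3 u v 0))"
    unfolding sum_distrib_right by (rule sum.cong[OF refl], rule sum.swap)
  also have "\<dots> = of_int p * (\<Sum>u\<in>A. \<Sum>v\<in>A. if p dvd L u v then ep p (R1 x1 x2 x3 u v 0) else 0)"
    unfolding sum_y3 sum_distrib_left by (intro sum.cong refl) simp
  finally show ?thesis unfolding A_def L_def .
qed

text \<open>Off the diagonal \<open>x1 = x3\<close> this is the value of \<open>K1\<close>; on it, its value is \<open>1 / p\<close>.\<close>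

definition K1_explicit :: "int \<Rightarrow> int \<Rightarrow> int \<Rightarrow> int \<Rightarrow> complex" where
  "K1_explicit p x1 x2 x3 = 1 / of_int p ^ 2 *
     (\<Sum>w\<in>{0..<p}. ep p (- (x1 - x2) * (x1 - x3) * w * (1 + (x2 + x3) * w)))"

lemma K1_eq_K1_explicit:
  fixes p :: int
  assumes p: "prime p" "p > 2" and off_diag: "\<not> p dvd x1 - x3"
  shows "K1 p x1 x2 x3 = K1_explicit p x1 x2 x3"
proof -
  have p0: "p > 0" using p by simp
  have cop: "coprime (x1 - x3) p"
    using p off_diag by (metis coprime_commute prime_imp_coprime)
  have "(\<Sum>y1\<in>{0..<p}. \<Sum>y2\<in>{0..<p}. \<Sum>y3\<in>{0..<p}. ep p (R1 x1 x2 x3 y1 y2 y3))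
      = of_int p * (\<Sum>w\<in>{0..<p}.
          ep p (R1 x1 x2 x3 (((x1 - x3) * w) mod p) (((2 * x1 - x2 - x3) * w) mod p) 0))"
    unfolding sum_ep_R1[OF p] sum_over_line_mod[OF p0 cop] ..
  also have "\<dots> = of_int p * (\<Sum>w\<in>{0..<p}.
          ep p (R1 x1 x2 x3 ((x1 - x3) * w) ((2 * x1 - x2 - x3) * w) 0))"
    by (intro arg_cong[where f = "\<lambda>s. of_int p * s"] sum.cong refl ep_cong[OF p0] R1_cong)
      (simp_all add: cong_def)
  also have "\<dots> = of_int p * (\<Sum>w\<in>{0..<p}. ep p (- (x1 - x2) * (x1 - x3) * w * (1 + (x2 + x3) * w)))"
    by (simp only: R1_on_line)
  finally have "K1 p x1 x2 x3 = 1 / of_int p ^ 3 *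
      (of_int p * (\<Sum>w\<in>{0..<p}. ep p (- (x1 - x2) * (x1 - x3) * w * (1 + (x2 + x3) * w))))"
    unfolding K1_def by (rule arg_cong)
  also have "\<dots> = K1_explicit p x1 x2 x3"
    unfolding K1_explicit_def using p0 by (simp add: power3_eq_cube power2_eq_square)
  finally show ?thesis .
qed

definition quadruple_weight :: "int \<Rightarrow> (int \<Rightarrow> complex) \<Rightarrow> int \<Rightarrow> int \<Rightarrow> int \<Rightarrow> complex" where
  "quadruple_weight p f x1 x2 x3 = f x1 * cnj (f x3) * cnj (f x2) * f ((x2 + x3 - x1) mod p)"

definition twisted_convolution :: "int \<Rightarrow> (int \<Rightarrow> complex) \<Rightarrow> int \<Rightarrow> int \<Rightarrow> complex" where
  "twisted_convolution p f s l = (\<Sum>a\<in>{0..<p}. f a * f ((s - a) mod p) * ep p (l * (a * (s - a))))"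

text \<open>With \<open>s = x2 + x3\<close> the phase of \<open>K1_explicit\<close> is \<open>l (x1 (s - x1) - x2 (s - x2))\<close>
  where \<open>l = w (1 + s w)\<close>, so the sum over \<open>x1, x2\<close> factors as a squared modulus.\<close>

lemma sum_quadruple_weight_ep:
  fixes p w :: int and f :: "int \<Rightarrow> complex"
  assumes p: "p > 0"
  shows "(\<Sum>x1\<in>{0..<p}. \<Sum>x2\<in>{0..<p}. \<Sum>x3\<in>{0..<p}. quadruple_weight p f x1 x2 x3
            * ep p (- (x1 - x2) * (x1 - x3) * w * (1 + (x2 + x3) * w)))
       = (\<Sum>s\<in>{0..<p}. of_real ((cmod (twisted_convolution p f s ((w * (1 + s * w)) mod p)))^2))"
proof -
  define A where "A = {0..<p}"
  define G where "G x1 x2 x3 = quadruple_weight p f x1 x2 x3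
    * ep p (- (x1 - x2) * (x1 - x3) * w * (1 + (x2 + x3) * w))" for x1 x2 x3
  define lam where "lam s = (w * (1 + s * w)) mod p" for s
  define P where "P s a = f a * f ((s - a) mod p) * ep p (lam s * (a * (s - a)))" for s a
  have factor: "G x1 x2 ((s - x2) mod p) = P s x1 * cnj (P s x2)" for s x1 x2
  proof -
    define x3 where "x3 = (s - x2) mod p"
    have x3: "[x3 = s - x2] (mod p)" unfolding x3_def by simp
    have "[x2 + x3 - x1 = x2 + (s - x2) - x1] (mod p)"
      by (intro cong_diff cong_add cong_refl x3)
    then have x4: "(x2 + x3 - x1) mod p = (s - x1) mod p" by (simp add: cong_def)
    have "[- (x1 - x2) * (x1 - x3) * w * (1 + (x2 + x3) * w)
          = - (x1 - x2) * (x1 - (s - x2)) * w * (1 + (x2 + (s - x2)) * w)] (mod p)"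
      by (intro cong_add cong_mult cong_diff cong_uminus cong_refl x3)
    also have "- (x1 - x2) * (x1 - (s - x2)) * w * (1 + (x2 + (s - x2)) * w)
        = w * (1 + s * w) * (x1 * (s - x1)) + - (w * (1 + s * w) * (x2 * (s - x2)))"
      by (simp add: algebra_simps)
    also have "[\<dots> = lam s * (x1 * (s - x1)) + - (lam s * (x2 * (s - x2)))] (mod p)"
      unfolding lam_def by (intro cong_add cong_mult cong_uminus cong_refl) simp_all
    finally have "ep p (- (x1 - x2) * (x1 - x3) * w * (1 + (x2 + x3) * w))
        = ep p (lam s * (x1 * (s - x1)) + - (lam s * (x2 * (s - x2))))"
      by (rule ep_cong[OF p])
    then have phase: "ep p (- (x1 - x2) * (x1 - x3) * w * (1 + (x2 + x3) * w))
        = ep p (lam s * (x1 * (s - x1))) * cnj (ep p (lam s * (x2 * (s - x2))))"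
      by (simp only: ep_add cnj_ep)
    show ?thesis
      unfolding G_def P_def quadruple_weight_def x3_def[symmetric] x4 phase by (simp add: ac_simps)
  qed
  have "(\<Sum>x1\<in>A. \<Sum>x2\<in>A. \<Sum>x3\<in>A. G x1 x2 x3) = (\<Sum>x1\<in>A. \<Sum>x2\<in>A. \<Sum>s\<in>A. G x1 x2 ((s + - x2) mod p))"
    unfolding A_def by (intro sum.cong refl sum_mod_shift[OF p, symmetric])
  also have "\<dots> = (\<Sum>x1\<in>A. \<Sum>s\<in>A. \<Sum>x2\<in>A. G x1 x2 ((s - x2) mod p))"
    unfolding diff_conv_add_uminus by (rule sum.cong[OF refl], rule sum.swap)
  also have "\<dots> = (\<Sum>s\<in>A. \<Sum>x1\<in>A. \<Sum>x2\<in>A. P s x1 * cnj (P s x2))"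
    by (subst sum.swap) (intro sum.cong refl factor)
  also have "\<dots> = (\<Sum>s\<in>A. (\<Sum>a\<in>A. P s a) * cnj (\<Sum>a\<in>A. P s a))"
    by (simp only: sum_product cnj_sum)
  also have "\<dots> = (\<Sum>s\<in>A. of_real ((cmod (twisted_convolution p f s (lam s)))^2))"
    unfolding complex_norm_square twisted_convolution_def P_def A_def ..
  finally show ?thesis unfolding A_def G_def lam_def .
qed

lemma sum_norm_square_twisted_convolution_le:
  fixes p s :: int and f :: "int \<Rightarrow> complex"
  assumes p: "prime p"
  shows "(\<Sum>w\<in>{0..<p}. (cmod (twisted_convolution p f s ((w * (1 + s * w)) mod p)))^2)
     \<le> 4 * of_int p * (\<Sum>a\<in>{0..<p}. (cmod (f a * f ((s - a) mod p)))^2)"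
proof -
  have p0: "p > 0" using p prime_gt_0_int by blast
  have nondeg: "\<not> (p dvd a \<and> p dvd 1)" for a using p not_prime_unit by blast
  have "(\<Sum>w\<in>{0..<p}. (cmod (twisted_convolution p f s ((w * (1 + s * w)) mod p)))^2)
      \<le> real 2 * (\<Sum>l\<in>{0..<p}. (cmod (twisted_convolution p f s l))^2)"
  proof (rule sum_comp_le_card_fibre)
    fix l
    show "card {w\<in>{0..<p}. (w * (1 + s * w)) mod p = l} \<le> 2"
    proof (rule card_quadratic_congruence_solutions_le_2[OF p nondeg])
      fix w assume "w \<in> {w\<in>{0..<p}. (w * (1 + s * w)) mod p = l}"
      then have "[w * (1 + s * w) = l] (mod p)" by (auto simp: cong_def)
      moreover have "s * w^2 + 1 * w = w * (1 + s * w)" by (simp add: algebra_simps power2_eq_square)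
      ultimately show "[s * w^2 + 1 * w = l] (mod p)" by simp
    qed auto
  qed (use p0 in auto)
  also have "(\<Sum>l\<in>{0..<p}. (cmod (twisted_convolution p f s l))^2)
      \<le> real 2 * of_int p * (\<Sum>a\<in>{0..<p}. (cmod (f a * f ((s - a) mod p)))^2)"
    unfolding twisted_convolution_def
  proof (rule sum_norm_exp_sum_square_le[OF p0])
    fix a
    have nondeg': "\<not> (p dvd - 1 \<and> p dvd s)" using nondeg[of s] by auto
    show "card {b\<in>{0..<p}. p dvd a * (s - a) - b * (s - b)} \<le> 2"
    proof (rule card_quadratic_congruence_solutions_le_2[OF p nondeg'])
      fix b assume "b \<in> {b\<in>{0..<p}. p dvd a * (s - a) - b * (s - b)}"
      then have "p dvd b * (s - b) - a * (s - a)" by (metis (mono_tags) mem_Collect_eq dvd_diff_commute)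
      moreover have "(- 1) * b^2 + s * b = b * (s - b)" by (simp add: algebra_simps power2_eq_square)
      ultimately show "[(- 1) * b^2 + s * b = a * (s - a)] (mod p)" by (simp add: cong_iff_dvd_diff)
    qed auto
  qed
  finally show ?thesis by simp
qed

lemma sum_norm_square_convolution:
  fixes p :: int and f :: "int \<Rightarrow> complex"
  assumes p: "p > 0"
  shows "(\<Sum>s\<in>{0..<p}. \<Sum>a\<in>{0..<p}. (cmod (f a * f ((s - a) mod p)))^2)
           = (\<Sum>x\<in>{0..<p}. (cmod (f x))^2)^2"
proof -
  have "(\<Sum>s\<in>{0..<p}. \<Sum>a\<in>{0..<p}. (cmod (f a * f ((s - a) mod p)))^2)
      = (\<Sum>a\<in>{0..<p}. (cmod (f a))^2 * (\<Sum>s\<in>{0..<p}. (cmod (f ((s + - a) mod p)))^2))"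
    by (subst sum.swap) (simp add: norm_mult power_mult_distrib sum_distrib_left)
  also have "\<dots> = (\<Sum>a\<in>{0..<p}. (cmod (f a))^2 * (\<Sum>x\<in>{0..<p}. (cmod (f x))^2))"
    by (simp only: sum_mod_shift[OF p, of "\<lambda>x. (cmod (f x))^2"])
  also have "\<dots> = (\<Sum>x\<in>{0..<p}. (cmod (f x))^2)^2"
    by (simp add: sum_distrib_right[symmetric] power2_eq_square)
  finally show ?thesis .
qed

lemma sum_swap_innermost_outward:
  "(\<Sum>x\<in>A. \<Sum>y\<in>B. \<Sum>z\<in>C. \<Sum>w\<in>D. g x y z w) = (\<Sum>w\<in>D. \<Sum>x\<in>A. \<Sum>y\<in>B. \<Sum>z\<in>C. g x y z w)"
proof -
  have "(\<Sum>x\<in>A. \<Sum>y\<in>B. \<Sum>z\<in>C. \<Sum>w\<in>D. g x y z w) = (\<Sum>x\<in>A. \<Sum>y\<in>B. \<Sum>w\<in>D. \<Sum>z\<in>C. g x y z w)"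
    by (rule sum.cong[OF refl], rule sum.cong[OF refl], rule sum.swap)
  also have "\<dots> = (\<Sum>x\<in>A. \<Sum>w\<in>D. \<Sum>y\<in>B. \<Sum>z\<in>C. g x y z w)"
    by (rule sum.cong[OF refl], rule sum.swap)
  also have "\<dots> = (\<Sum>w\<in>D. \<Sum>x\<in>A. \<Sum>y\<in>B. \<Sum>z\<in>C. g x y z w)"
    by (rule sum.swap)
  finally show ?thesis .
qed

lemma norm_sum_quadruple_weight_K1_explicit_le:
  fixes p :: int and f :: "int \<Rightarrow> complex"
  assumes p: "prime p"
  shows "cmod (\<Sum>x1\<in>{0..<p}. \<Sum>x2\<in>{0..<p}. \<Sum>x3\<in>{0..<p}.
                 quadruple_weight p f x1 x2 x3 * K1_explicit p x1 x2 x3)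
           \<le> 4 / p * (\<Sum>x\<in>{0..<p}. (cmod (f x))^2)^2"
proof -
  have p0: "p > 0" using p prime_gt_0_int by blast
  define A where "A = {0..<p}"
  define X where "X s w = (cmod (twisted_convolution p f s ((w * (1 + s * w)) mod p)))^2" for s w
  have "(\<Sum>x1\<in>A. \<Sum>x2\<in>A. \<Sum>x3\<in>A. quadruple_weight p f x1 x2 x3 * K1_explicit p x1 x2 x3)
      = 1 / of_int p ^ 2 * (\<Sum>x1\<in>A. \<Sum>x2\<in>A. \<Sum>x3\<in>A. \<Sum>w\<in>A. quadruple_weight p f x1 x2 x3
            * ep p (- (x1 - x2) * (x1 - x3) * w * (1 + (x2 + x3) * w)))"
    unfolding K1_explicit_def A_def by (simp add: sum_distrib_left ac_simps)
  also have "\<dots> = 1 / of_int p ^ 2 * (\<Sum>w\<in>A. \<Sum>x1\<in>A. \<Sum>x2\<in>A. \<Sum>x3\<in>A. quadruple_weight p f x1 x2 x3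
            * ep p (- (x1 - x2) * (x1 - x3) * w * (1 + (x2 + x3) * w)))"
    by (subst sum_swap_innermost_outward) (rule refl)
  also have "\<dots> = of_real (1 / p ^ 2 * (\<Sum>s\<in>A. \<Sum>w\<in>A. X s w))"
    unfolding A_def sum_quadruple_weight_ep[OF p0] X_def by (subst (2) sum.swap) simp
  finally have "cmod (\<Sum>x1\<in>A. \<Sum>x2\<in>A. \<Sum>x3\<in>A. quadruple_weight p f x1 x2 x3 * K1_explicit p x1 x2 x3)
      = \<bar>1 / p ^ 2 * (\<Sum>s\<in>A. \<Sum>w\<in>A. X s w)\<bar>"
    by (simp only: norm_of_real)
  also have "\<dots> = 1 / p ^ 2 * (\<Sum>s\<in>A. \<Sum>w\<in>A. X s w)"
    unfolding X_def by (simp add: sum_nonneg)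
  also have "\<dots> \<le> 1 / p ^ 2 * (\<Sum>s\<in>A. 4 * p * (\<Sum>a\<in>A. (cmod (f a * f ((s - a) mod p)))^2))"
    unfolding A_def X_def using sum_norm_square_twisted_convolution_le[OF p]
    by (intro mult_left_mono sum_mono) auto
  also have "\<dots> = 4 / p * (\<Sum>x\<in>A. (cmod (f x))^2)^2"
    unfolding A_def sum_distrib_left[symmetric] sum_norm_square_convolution[OF p0]
    using p0 by (simp add: power2_eq_square)
  finally show ?thesis unfolding A_def .
qed

lemma sum_diagonal_quadruple_weight_K1_explicit:
  fixes p :: int and f :: "int \<Rightarrow> complex"
  assumes p: "p > 0"
  shows "(\<Sum>x1\<in>{0..<p}. \<Sum>x2\<in>{0..<p}. quadruple_weight p f x1 x2 x1 * K1_explicit p x1 x2 x1)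
           = of_real ((\<Sum>x\<in>{0..<p}. (cmod (f x))^2)^2 / p)"
proof -
  have "quadruple_weight p f x1 x2 x1 * K1_explicit p x1 x2 x1
      = of_real ((cmod (f x1))^2 * (cmod (f x2))^2 / p)" if "x2 \<in> {0..<p}" for x1 x2
  proof -
    have "K1_explicit p x1 x2 x1 = 1 / of_int p"
      unfolding K1_explicit_def using p by (simp add: power2_eq_square)
    moreover have "quadruple_weight p f x1 x2 x1 = (f x1 * cnj (f x1)) * (f x2 * cnj (f x2))"
      using that unfolding quadruple_weight_def by (simp add: ac_simps)
    ultimately show ?thesis unfolding complex_norm_square[symmetric] by simp
  qed
  then have "(\<Sum>x1\<in>{0..<p}. \<Sum>x2\<in>{0..<p}. quadruple_weight p f x1 x2 x1 * K1_explicit p x1 x2 x1)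
      = of_real (\<Sum>x1\<in>{0..<p}. \<Sum>x2\<in>{0..<p}. (cmod (f x1))^2 * (cmod (f x2))^2 / p)"
    by simp
  also have "(\<Sum>x1\<in>{0..<p}. \<Sum>x2\<in>{0..<p}. (cmod (f x1))^2 * (cmod (f x2))^2 / p)
      = (\<Sum>x\<in>{0..<p}. (cmod (f x))^2)^2 / p"
    by (simp add: power2_eq_square[of "sum _ _"] sum_product sum_divide_distrib)
  finally show ?thesis .
qed

lemma norm_offdiagonal_sum_le:
  fixes p :: int and f :: "int \<Rightarrow> complex"
  assumes p: "prime p" "p > 2"
  shows "cmod (\<Sum>x1\<in>{0..<p}. \<Sum>x2\<in>{0..<p}. \<Sum>x3\<in>{0..<p}.
        if x1 \<noteq> x3 then f x1 * cnj (f x3) * cnj (f x2) * f ((x2 + x3 - x1) mod p)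
                         * K1 p x1 x2 x3 else 0)
     \<le> 5 / p * (\<Sum>x\<in>{0..<p}. (cmod (f x))^2)^2"
proof -
  have p0: "p > 0" using p by simp
  define A where "A = {0..<p}"
  define T where "T x1 x2 x3 = quadruple_weight p f x1 x2 x3 * K1_explicit p x1 x2 x3" for x1 x2 x3
  define N where "N = (\<Sum>x\<in>A. (cmod (f x))^2)"
  have "(if x1 \<noteq> x3 then f x1 * cnj (f x3) * cnj (f x2) * f ((x2 + x3 - x1) mod p)
          * K1 p x1 x2 x3 else 0) = T x1 x2 x3 - (if x3 = x1 then T x1 x2 x3 else 0)"
    if "x1 \<in> A" "x3 \<in> A" for x1 x2 x3
  proof (cases "x1 = x3")
    case False
    then have "\<not> p dvd x1 - x3"
      using that cong_less_imp_eq_int unfolding A_def by (auto simp: cong_iff_dvd_diff[symmetric])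
    with False show ?thesis
      unfolding T_def quadruple_weight_def by (simp add: K1_eq_K1_explicit[OF p])
  qed simp
  then have "(\<Sum>x1\<in>A. \<Sum>x2\<in>A. \<Sum>x3\<in>A.
        if x1 \<noteq> x3 then f x1 * cnj (f x3) * cnj (f x2) * f ((x2 + x3 - x1) mod p)
          * K1 p x1 x2 x3 else 0)
      = (\<Sum>x1\<in>A. \<Sum>x2\<in>A. \<Sum>x3\<in>A. T x1 x2 x3) - (\<Sum>x1\<in>A. \<Sum>x2\<in>A. T x1 x2 x1)"
    by (simp add: sum_subtractf sum.delta A_def)
  also have "cmod \<dots> \<le> 4 / p * N^2 + N^2 / p"
  proof (rule order_trans[OF norm_triangle_ineq4 add_mono])
    show "cmod (\<Sum>x1\<in>A. \<Sum>x2\<in>A. \<Sum>x3\<in>A. T x1 x2 x3) \<le> 4 / p * N^2"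
      using norm_sum_quadruple_weight_K1_explicit_le[OF p(1)] unfolding T_def N_def A_def .
    show "cmod (\<Sum>x1\<in>A. \<Sum>x2\<in>A. T x1 x2 x1) \<le> N^2 / p"
      unfolding T_def N_def A_def sum_diagonal_quadruple_weight_K1_explicit[OF p0]
      using p0 by (simp only: norm_of_real) (simp add: sum_nonneg)
  qed
  finally show ?thesis unfolding N_def A_def by (simp add: field_simps)
qed

lemma norm_offdiagonal_sum_le_powr:
  fixes p :: int and f :: "int \<Rightarrow> complex"
  assumes p: "prime p" "p > 2"
  shows "cmod (\<Sum>x1\<in>{0..<p}. \<Sum>x2\<in>{0..<p}. \<Sum>x3\<in>{0..<p}.
        if x1 \<noteq> x3 then f x1 * cnj (f x3) * cnj (f x2) * f ((x2 + x3 - x1) mod p)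
                         * K1 p x1 x2 x3 else 0)
     \<le> 5 * (real_of_int p) powr (-3/4) * (norm2 p f)^4"
proof -
  define N where "N = (\<Sum>x\<in>{0..<p}. (cmod (f x))^2)"
  have "(norm2 p f)^2 = N"
    unfolding norm2_def N_def by (simp add: sum_nonneg)
  then have norm2_4: "(norm2 p f)^4 = N^2"
    by (simp add: power4_eq_xxxx power2_eq_square)
  have "1 / real_of_int p = real_of_int p powr (-1)"
    using p by (simp add: powr_minus_divide)
  also have "\<dots> \<le> real_of_int p powr (-3/4)"
    using p by (intro powr_mono) auto
  finally have "5 * (1 / p) * N^2 \<le> 5 * real_of_int p powr (-3/4) * N^2"
    by (intro mult_right_mono mult_left_mono) auto
  with norm_offdiagonal_sum_le[OF p, of f, folded N_def] show ?thesis
    unfolding norm2_4 by simp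
qed

theorem mainTheorem7:
  shows "\<exists>C::real. C > 0 \<and> (\<exists>P0::int. \<forall>(p::int) (f::int \<Rightarrow> complex).
     prime p \<and> p \<ge> P0 \<longrightarrow>
     cmod (\<Sum>x1\<in>{0..<p}. \<Sum>x2\<in>{0..<p}. \<Sum>x3\<in>{0..<p}.
        if x1 \<noteq> x3 then f x1 * cnj (f x3) * cnj (f x2) * f ((x2 + x3 - x1) mod p)
                         * K1 p x1 x2 x3 else 0)
     \<le> C * (real_of_int p) powr (-3/4) * (norm2 p f)^4)"
  by (intro exI[of _ "5 :: real"] exI[of _ "3 :: int"] conjI allI impI norm_offdiagonal_sum_le_powr)
    auto

end
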